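(* Let $c_2,c_3$ be constants, $\mu(t)=t^2+c_2t+c_3$, and $\vartheta_n(t)=(-4)^{-n}(2t+1/2+c_2)_n(-2t+1/2-c_2)_n$ ($n\ge0$). Let $\{P_n\}_{n\ge0}$ be a sequence of monic orthogonal polynomials in the lattice $\mu(t)$, $\deg P_n=n$, and write $P_n=\sum_{k=0}^{n}A_{n,k}\vartheta_k(t)$, $A=(A_{n,k})_{n,k\ge0}$ (lower triangular, unit diagonal). Let $\tilde A=\tilde D A D$, where $D$ is the infinite matrix with $D_{n+1,n}=n+1$ ($n\ge0$) and all other entries zero, and $\tilde D$ is the infinite matrix with $\tilde D_{n,n+1}=1/(n+1)$ ($n\ge0$) and all other entries zero. Let $\mathbf{X}^1=X+\operatorname{diag}\{f_0,f_1,\ldots\}$, where $X_{n,n+1}=1$ (other entries zero) and $f_n=-\frac{c_2^2}{4}+\frac{(2n+1)^2}{16}+c_3$. Then $\{P_n\}$ is a sequence of classical orthogonal polynomials on the quadratic lattice $\mu(t)$ if and only if $$M\,\tilde A=\tilde A\,\mathbf{X}^1,$$ where $M$ is the tridiagonal matrix with $M_{n,n}=\beta'_n$, $M_{n,n+1}=1$, $M_{n,n-1}=\gamma'_n$ formed from the three-term recurrence coefficients of the sequence of divided differences, namely $\mu(t)Q_n=Q_{n+1}+\beta'_nQ_n+\gamma'_nQ_{n-1}$ with $Q_n=P'_{n+1}$.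
   Context: $(a)_n$ is the Pochhammer symbol. The divided-difference operator is $\mathbb{D}f(t)=\frac{f(t+1/2)-f(t-1/2)}{\mu(t+1/2)-\mu(t-1/2)}$; it maps polynomials of degree $n$ in $\mu(t)$ to polynomials of degree $n-1$ in $\mu(t)$, and $\mathbb{D}\vartheta_n=n\vartheta_{n-1}$. A sequence of monic polynomials $\{R_n\}$ in $\mu(t)$ is called orthogonal if it satisfies $\mu(t)R_n=R_{n+1}+b_nR_n+c_nR_{n-1}$, $R_{-1}=0$, $R_0=1$, with $c_n\neq0$. Set $P'_n=\frac1n\mathbb{D}P_n$ for $n\ge1$ (monic, degree $n-1$). The sequence $\{P_n\}$ is called classical (Hahn's property) if $\{P'_n\}_{n\ge1}$ is also a sequence of monic orthogonal polynomials in $\mu(t)$. Note that $\tilde A$ is the coefficient matrix of $(P'_1,P'_2,\ldots)$ in the basis $\{\vartheta_k\}$. Indices start at $0$. *)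

theory Defs
  imports "HOL-Computational_Algebra.Polynomial"
begin

text \<open>All polynomials are polynomials in the variable t (type 'a poly).
  A polynomial in the lattice mu(t) is one of the form pcompose p (lattice c2 c3).\<close>

definition lattice :: "'a::field_char_0 \<Rightarrow> 'a \<Rightarrow> 'a poly" where
  "lattice c2 c3 = [:c3, c2, 1:]"

definition theta :: "'a::field_char_0 \<Rightarrow> 'a \<Rightarrow> nat \<Rightarrow> 'a poly" where
  "theta c2 c3 n = smult (inverse ((-4) ^ n))
     (pochhammer [:1/2 + c2, 2:] n * pochhammer [:1/2 - c2, -2:] n)"

definition divdiff :: "'a::field_char_0 \<Rightarrow> 'a \<Rightarrow> 'a poly \<Rightarrow> 'a poly" where
  "divdiff c2 c3 f =
     (pcompose f [:1/2, 1:] - pcompose f [:-1/2, 1:]) div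
     (pcompose (lattice c2 c3) [:1/2, 1:] - pcompose (lattice c2 c3) [:-1/2, 1:])"

definition dprime :: "'a::field_char_0 \<Rightarrow> 'a \<Rightarrow> (nat \<Rightarrow> 'a poly) \<Rightarrow> nat \<Rightarrow> 'a poly" where
  "dprime c2 c3 P n = smult (inverse (of_nat n)) (divdiff c2 c3 (P n))"

definition orthogonal_lattice :: "'a::field_char_0 poly \<Rightarrow> (nat \<Rightarrow> 'a poly) \<Rightarrow> bool" where
  "orthogonal_lattice mu R \<longleftrightarrow> R 0 = 1 \<and>
     (\<exists>b c. (\<forall>n\<ge>1. c n \<noteq> 0) \<and>
        (\<forall>n. mu * R n = R (Suc n) + smult (b n) (R n)
                + (if n = 0 then 0 else smult (c n) (R (n - 1)))))"

text \<open>Classical (Hahn's property): (P'_{n+1})_{n\<ge>0} is again monic orthogonal in mu.\<close>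
definition classical_lattice :: "'a::field_char_0 \<Rightarrow> 'a \<Rightarrow> (nat \<Rightarrow> 'a poly) \<Rightarrow> bool" where
  "classical_lattice c2 c3 P \<longleftrightarrow>
     orthogonal_lattice (lattice c2 c3) (\<lambda>n. dprime c2 c3 P (Suc n))"

definition coeffA :: "'a::field_char_0 \<Rightarrow> 'a \<Rightarrow> (nat \<Rightarrow> 'a poly) \<Rightarrow> nat \<Rightarrow> nat \<Rightarrow> 'a" where
  "coeffA c2 c3 P = (THE A. (\<forall>n. P n = (\<Sum>k\<le>n. smult (A n k) (theta c2 c3 k))) \<and>
                            (\<forall>n k. n < k \<longrightarrow> A n k = 0))"

text \<open>Infinite matrices indexed from 0; product of a row-finite matrix F with G.\<close>
definition mmult :: "(nat \<Rightarrow> nat \<Rightarrow> 'a::comm_ring_1) \<Rightarrow> (nat \<Rightarrow> nat \<Rightarrow> 'a) \<Rightarrow> nat \<Rightarrow> nat \<Rightarrow> 'a" where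
  "mmult F G i j = (\<Sum>k | F i k \<noteq> 0. F i k * G k j)"

definition Dmat :: "nat \<Rightarrow> nat \<Rightarrow> 'a::field_char_0" where
  "Dmat i j = (if i = Suc j then of_nat (Suc j) else 0)"

definition Dtilde :: "nat \<Rightarrow> nat \<Rightarrow> 'a::field_char_0" where
  "Dtilde i j = (if j = Suc i then inverse (of_nat (Suc i)) else 0)"

definition Atilde :: "'a::field_char_0 \<Rightarrow> 'a \<Rightarrow> (nat \<Rightarrow> 'a poly) \<Rightarrow> nat \<Rightarrow> nat \<Rightarrow> 'a" where
  "Atilde c2 c3 P = mmult (mmult Dtilde (coeffA c2 c3 P)) Dmat"

definition fcoef :: "'a::field_char_0 \<Rightarrow> 'a \<Rightarrow> nat \<Rightarrow> 'a" where
  "fcoef c2 c3 n = - (c2 ^ 2) / 4 + (2 * of_nat n + 1)^2 / 16 + c3"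

definition X1 :: "'a::field_char_0 \<Rightarrow> 'a \<Rightarrow> nat \<Rightarrow> nat \<Rightarrow> 'a" where
  "X1 c2 c3 i j = (if j = Suc i then 1 else if j = i then fcoef c2 c3 i else 0)"

definition Mtri :: "(nat \<Rightarrow> 'a::field_char_0) \<Rightarrow> (nat \<Rightarrow> 'a) \<Rightarrow> nat \<Rightarrow> nat \<Rightarrow> 'a" where
  "Mtri beta gamma i j = (if j = i then beta i else if j = Suc i then 1
                          else if i = Suc j then gamma i else 0)"

end

theory Submission
  imports Defs
begin

text \<open>In the basis \<open>\<theta>\<^sub>k\<close> both operators are bidiagonal: \<open>\<mu> \<theta>\<^sub>k = \<theta>\<^sub>k\<^sub>+\<^sub>1 + f\<^sub>k \<theta>\<^sub>k\<close>, so
  multiplication by \<open>\<mu>\<close> acts on rows of \<open>\<theta>\<close>-coordinates through \<open>X\<^sup>1\<close>, and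
  \<open>\<DD> \<theta>\<^sub>k = k \<theta>\<^sub>k\<^sub>-\<^sub>1\<close>, so row \<open>i\<close> of \<open>\<tilde>A = \<tilde>D A D\<close> lists the \<open>\<theta>\<close>-coordinates of
  \<open>Q\<^sub>i = P'\<^sub>i\<^sub>+\<^sub>1\<close>. Row \<open>i\<close> of \<open>M \<tilde>A = \<tilde>A X\<^sup>1\<close> is therefore the coordinate form of
  \<open>\<mu> Q\<^sub>i = Q\<^sub>i\<^sub>+\<^sub>1 + \<beta>'\<^sub>i Q\<^sub>i + \<gamma>'\<^sub>i Q\<^sub>i\<^sub>-\<^sub>1\<close>, and the \<open>\<theta>\<^sub>k\<close> are linearly independent since
  \<open>deg \<theta>\<^sub>k = 2k\<close>. As \<open>Q\<^sub>0 = 1\<close> always holds, the matrix identity with \<open>\<gamma>'\<^sub>n \<noteq> 0\<close> says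
  exactly that \<open>(Q\<^sub>n)\<close> is orthogonal.\<close>

lemma smult_sum_right: "smult c (\<Sum>k\<in>S. f k) = (\<Sum>k\<in>S. smult c (f k))"
  by (induction S rule: infinite_finite_induct) (auto simp: smult_add_right)

lemma sum_smult_eq_0_imp_coeffs_eq_0:
  fixes b :: "nat \<Rightarrow> 'a::idom poly"
  assumes "strict_mono (\<lambda>k. degree (b k))" "\<And>k. b k \<noteq> 0"
    and "(\<Sum>k\<le>N. smult (a k) (b k)) = 0" "k \<le> N"
  shows "a k = 0"
  using assms(3,4)
proof (induction N arbitrary: k)
  case 0
  then show ?case using assms(2) by simp
next
  case (Suc N)
  let ?d = "degree (b (Suc N))"
  have "coeff (\<Sum>k\<le>N. smult (a k) (b k)) ?d = 0"
    using strict_monoD[OF assms(1)] by (auto simp: coeff_sum coeff_eq_0)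
  then have "coeff (\<Sum>k\<le>Suc N. smult (a k) (b k)) ?d = a (Suc N) * lead_coeff (b (Suc N))"
    by simp
  then have "a (Suc N) * lead_coeff (b (Suc N)) = 0"
    using Suc.prems(1) by (metis coeff_0)
  then have aN: "a (Suc N) = 0"
    using assms(2) by simp
  with Suc.prems(1) have "(\<Sum>k\<le>N. smult (a k) (b k)) = 0" by simp
  with Suc aN show ?case by (cases "k = Suc N") auto
qed

lemma sum_smult_eq_iff_coeffs_eq:
  fixes b :: "nat \<Rightarrow> 'a::idom poly"
  assumes "strict_mono (\<lambda>k. degree (b k))" "\<And>k. b k \<noteq> 0"
  shows "(\<Sum>k\<le>N. smult (a k) (b k)) = (\<Sum>k\<le>N. smult (a' k) (b k)) \<longleftrightarrow> (\<forall>k\<le>N. a k = a' k)"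
proof
  assume "(\<Sum>k\<le>N. smult (a k) (b k)) = (\<Sum>k\<le>N. smult (a' k) (b k))"
  then have "(\<Sum>k\<le>N. smult (a k - a' k) (b k)) = 0"
    by (simp add: smult_diff_left sum_subtractf)
  then show "\<forall>k\<le>N. a k = a' k"
    using sum_smult_eq_0_imp_coeffs_eq_0[OF assms] by force
qed simp

lemma mmult_eq_sum:
  assumes "finite S" "{k. F i k \<noteq> 0} \<subseteq> S"
  shows "mmult F G i j = (\<Sum>k\<in>S. F i k * G k j)"
  unfolding mmult_def by (rule sum.mono_neutral_left[OF assms]) auto

lemma sum_smult_mmult_row:
  fixes b :: "nat \<Rightarrow> 'a::field poly"
  assumes "finite S" "{k. F i k \<noteq> 0} \<subseteq> S"
  shows "(\<Sum>m\<le>N. smult (mmult F G i m) (b m))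
       = (\<Sum>k\<in>S. smult (F i k) (\<Sum>m\<le>N. smult (G k m) (b m)))"
proof -
  have "(\<Sum>m\<le>N. smult (mmult F G i m) (b m)) = (\<Sum>m\<le>N. \<Sum>k\<in>S. smult (F i k) (smult (G k m) (b m)))"
    by (simp add: mmult_eq_sum[where F=F and i=i, OF assms] smult_sum)
  also have "\<dots> = (\<Sum>k\<in>S. smult (F i k) (\<Sum>m\<le>N. smult (G k m) (b m)))"
    by (subst sum.swap) (simp add: smult_sum_right)
  finally show ?thesis .
qed

section \<open>The basis \<open>\<theta>\<^sub>k\<close>\<close>

lemma degree_lattice_minus_const: "degree (lattice c2 c3 - [:f:]) = 2"
  by (simp add: lattice_def numeral_2_eq_2)

lemma lead_coeff_lattice_minus_const: "lead_coeff (lattice c2 c3 - [:f:]) = 1"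
  by (simp add: lattice_def numeral_2_eq_2)

lemma theta_Suc: "theta c2 c3 (Suc k) = theta c2 c3 k * (lattice c2 c3 - [:fcoef c2 c3 k:])"
proof -
  have factor: "smult (inverse (-4)) (([:1/2 + c2, 2:] + of_nat k) * ([:1/2 - c2, -2:] + of_nat k))
      = lattice c2 c3 - [:fcoef c2 c3 k:]"
    by (rule poly_ext) (simp add: of_nat_poly lattice_def fcoef_def field_simps power2_eq_square; algebra)
  show ?thesis
    unfolding theta_def pochhammer_Suc by (simp add: factor[symmetric] mult_ac)
qed

lemma lattice_mult_theta:
  "lattice c2 c3 * theta c2 c3 k = theta c2 c3 (Suc k) + smult (fcoef c2 c3 k) (theta c2 c3 k)"
  by (simp add: theta_Suc algebra_simps)

lemma lead_coeff_theta: "lead_coeff (theta c2 c3 k) = 1"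
proof (induction k)
  case (Suc k)
  then show ?case by (simp only: theta_Suc lead_coeff_mult lead_coeff_lattice_minus_const mult_1)
qed (simp add: theta_def)

lemma theta_nonzero: "theta c2 c3 k \<noteq> 0"
  using lead_coeff_theta[of c2 c3 k] by auto

lemma degree_theta: "degree (theta c2 c3 k) = 2 * k"
proof (induction k)
  case (Suc k)
  have "lattice c2 c3 - [:fcoef c2 c3 k:] \<noteq> 0"
    using degree_lattice_minus_const[of c2 c3 "fcoef c2 c3 k"] by auto
  with Suc show ?case
    by (simp add: theta_Suc degree_mult_eq theta_nonzero degree_lattice_minus_const)
qed (simp add: theta_def)

lemma theta_coords_eq_iff:
  "(\<Sum>k\<le>N. smult (a k) (theta c2 c3 k)) = (\<Sum>k\<le>N. smult (a' k) (theta c2 c3 k))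
     \<longleftrightarrow> (\<forall>k\<le>N. a k = a' k)"
  by (rule sum_smult_eq_iff_coeffs_eq) (simp_all add: strict_mono_def degree_theta theta_nonzero)

section \<open>The divided difference in the basis \<open>\<theta>\<^sub>k\<close>\<close>

definition central_diff :: "'a::field_char_0 poly \<Rightarrow> 'a poly" where
  "central_diff f = pcompose f [:1/2, 1:] - pcompose f [:-1/2, 1:]"

lemma central_diff_lattice: "central_diff (lattice c2 c3) = [:c2, 2:]"
  unfolding central_diff_def
  by (rule poly_ext) (simp add: poly_pcompose lattice_def field_simps power2_eq_square; algebra)

lemma divdiff_eq_central_diff_div: "divdiff c2 c3 f = central_diff f div [:c2, 2:]"
  unfolding divdiff_def central_diff_lattice[unfolded central_diff_def] central_diff_def ..

text \<open>The Pochhammer arguments \<open>x = 2t + 1/2 + c\<^sub>2\<close> and \<open>y = -2t + 1/2 - c\<^sub>2\<close> of \<open>\<theta>\<close> satisfy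
  \<open>y - 1 = -x\<close>, so the shift \<open>t \<mapsto> t \<plusminus> 1/2\<close> turns \<open>\<theta>\<^sub>k\<^sub>+\<^sub>1\<close> into \<open>\<theta>\<^sub>k\<close> times the quadratic factor
  below (with \<open>s = \<plusminus>1\<close>). The two factors differ by \<open>(k + 1)(2t + c\<^sub>2)\<close>, which is where
  \<open>\<DD> \<theta>\<^sub>k\<^sub>+\<^sub>1 = (k + 1) \<theta>\<^sub>k\<close> comes from.\<close>

definition theta_shift_factor :: "'a::field_char_0 \<Rightarrow> 'a \<Rightarrow> nat \<Rightarrow> 'a poly" where
  "theta_shift_factor c2 s k =
     smult (1/16) ([:2*c2 + s * (2 * of_nat k + 1), 4:] * [:2*c2 + s * (2 * of_nat k + 3), 4:])"

lemma pcompose_theta_Suc_shift: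
  assumes "s\<^sup>2 = 1"
  shows "pcompose (theta c2 c3 (Suc k)) [:s/2, 1:] = theta c2 c3 k * theta_shift_factor c2 s k"
proof (induction k)
  case 0
  show ?case
    unfolding theta_Suc theta_def
    by (simp, rule poly_ext)
      (use assms in \<open>simp add: poly_pcompose theta_shift_factor_def lattice_def fcoef_def
         field_simps power2_eq_square; algebra\<close>)
next
  case (Suc k)
  have "theta_shift_factor c2 s k * pcompose (lattice c2 c3 - [:fcoef c2 c3 (Suc k):]) [:s/2, 1:]
      = (lattice c2 c3 - [:fcoef c2 c3 k:]) * theta_shift_factor c2 s (Suc k)"
    by (rule poly_ext)
      (use assms in \<open>simp add: poly_pcompose theta_shift_factor_def lattice_def fcoef_def
         field_simps power2_eq_square; algebra\<close>)
  then show ?case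
    by (simp add: theta_Suc[of c2 c3 "Suc k"] pcompose_mult Suc mult.assoc)
      (simp add: theta_Suc mult_ac)
qed

lemma central_diff_theta:
  "central_diff (theta c2 c3 k) = [:c2, 2:] * smult (of_nat k) (theta c2 c3 (k - 1))"
proof (cases k)
  case 0
  then show ?thesis by (simp add: central_diff_def theta_def pcompose_1)
next
  case (Suc j)
  have factor_diff:
    "theta_shift_factor c2 1 j - theta_shift_factor c2 (-1) j = smult (of_nat (Suc j)) [:c2, 2:]"
    by (rule poly_ext) (simp add: theta_shift_factor_def field_simps power2_eq_square; algebra)
  have "central_diff (theta c2 c3 k)
      = theta c2 c3 j * (theta_shift_factor c2 1 j - theta_shift_factor c2 (-1) j)"
    using pcompose_theta_Suc_shift[of 1 c2 c3 j] pcompose_theta_Suc_shift[of "-1" c2 c3 j]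
    by (simp add: central_diff_def Suc right_diff_distrib)
  also have "\<dots> = [:c2, 2:] * smult (of_nat (Suc j)) (theta c2 c3 j)"
    by (simp only: factor_diff mult_smult_right mult_smult_left mult.commute)
  finally show ?thesis by (simp add: Suc)
qed

lemma divdiff_theta_sum:
  "divdiff c2 c3 (\<Sum>k\<le>n. smult (a k) (theta c2 c3 k))
     = (\<Sum>k\<le>n. smult (a k * of_nat k) (theta c2 c3 (k - 1)))"
proof -
  have "central_diff (\<Sum>k\<le>n. smult (a k) (theta c2 c3 k))
      = (\<Sum>k\<le>n. smult (a k) (central_diff (theta c2 c3 k)))"
    by (simp add: central_diff_def pcompose_sum pcompose_smult sum_subtractf smult_diff_right)
  also have "\<dots> = [:c2, 2:] * (\<Sum>k\<le>n. smult (a k * of_nat k) (theta c2 c3 (k - 1)))"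
    by (simp add: central_diff_theta sum_distrib_left mult_smult_right smult_smult mult.commute)
  finally show ?thesis
    by (simp only: divdiff_eq_central_diff_div) (rule nonzero_mult_div_cancel_left, simp)
qed

section \<open>Expansion of \<open>P\<^sub>n\<close> in the basis \<open>\<theta>\<^sub>k\<close>\<close>

definition in_theta_span :: "'a::field_char_0 \<Rightarrow> 'a \<Rightarrow> nat \<Rightarrow> 'a poly \<Rightarrow> bool" where
  "in_theta_span c2 c3 n p \<longleftrightarrow> (\<exists>a. p = (\<Sum>k\<le>n. smult (a k) (theta c2 c3 k)))"

lemma in_theta_span_mono:
  assumes "m \<le> n" "in_theta_span c2 c3 m p"
  shows "in_theta_span c2 c3 n p"
proof -
  obtain a where p: "p = (\<Sum>k\<le>m. smult (a k) (theta c2 c3 k))"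
    using assms(2) by (auto simp: in_theta_span_def)
  have "p = (\<Sum>k\<le>n. smult (if k \<le> m then a k else 0) (theta c2 c3 k))"
    unfolding p using assms(1) by (intro sum.mono_neutral_cong_left) auto
  then show ?thesis by (auto simp: in_theta_span_def)
qed

lemma in_theta_span_add:
  "in_theta_span c2 c3 n p \<Longrightarrow> in_theta_span c2 c3 n q \<Longrightarrow> in_theta_span c2 c3 n (p + q)"
proof -
  assume "in_theta_span c2 c3 n p" "in_theta_span c2 c3 n q"
  then obtain a a' where "p = (\<Sum>k\<le>n. smult (a k) (theta c2 c3 k))"
    and "q = (\<Sum>k\<le>n. smult (a' k) (theta c2 c3 k))"
    by (auto simp: in_theta_span_def)
  then have "p + q = (\<Sum>k\<le>n. smult (a k + a' k) (theta c2 c3 k))"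
    by (simp add: smult_add_left sum.distrib)
  then show ?thesis by (auto simp: in_theta_span_def)
qed

lemma in_theta_span_smult:
  "in_theta_span c2 c3 n p \<Longrightarrow> in_theta_span c2 c3 n (smult c p)"
proof -
  assume "in_theta_span c2 c3 n p"
  then obtain a where "p = (\<Sum>k\<le>n. smult (a k) (theta c2 c3 k))"
    by (auto simp: in_theta_span_def)
  then have "smult c p = (\<Sum>k\<le>n. smult (c * a k) (theta c2 c3 k))"
    by (simp add: smult_sum_right)
  then show ?thesis by (auto simp: in_theta_span_def)
qed

lemma in_theta_span_diff:
  "in_theta_span c2 c3 n p \<Longrightarrow> in_theta_span c2 c3 n q \<Longrightarrow> in_theta_span c2 c3 n (p - q)"
  using in_theta_span_add[of c2 c3 n p "smult (-1) q"] in_theta_span_smult[of c2 c3 n q "-1"]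
  by simp

lemma in_theta_span_lattice_mult:
  assumes "in_theta_span c2 c3 n p"
  shows "in_theta_span c2 c3 (Suc n) (lattice c2 c3 * p)"
proof -
  obtain a where p: "p = (\<Sum>k\<le>n. smult (a k) (theta c2 c3 k))"
    using assms by (auto simp: in_theta_span_def)
  have "lattice c2 c3 * p = (\<Sum>k\<le>Suc n. smult (if k = 0 then 0 else a (k - 1)) (theta c2 c3 k))
        + (\<Sum>k\<le>n. smult (a k * fcoef c2 c3 k) (theta c2 c3 k))"
    unfolding p sum.atMost_Suc_shift
    by (simp add: sum_distrib_left lattice_mult_theta smult_add_right sum.distrib)
  moreover have "in_theta_span c2 c3 (Suc n)
      (\<Sum>k\<le>Suc n. smult (if k = 0 then 0 else a (k - 1)) (theta c2 c3 k))"
    unfolding in_theta_span_def by (rule exI, rule refl)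
  moreover have "in_theta_span c2 c3 (Suc n) (\<Sum>k\<le>n. smult (a k * fcoef c2 c3 k) (theta c2 c3 k))"
    by (rule in_theta_span_mono[of n]) (auto simp: in_theta_span_def)
  ultimately show ?thesis
    by (simp add: in_theta_span_add)
qed

definition three_term_recurrence ::
    "'a::field_char_0 poly \<Rightarrow> (nat \<Rightarrow> 'a poly) \<Rightarrow> (nat \<Rightarrow> 'a) \<Rightarrow> (nat \<Rightarrow> 'a) \<Rightarrow> bool" where
  "three_term_recurrence mu R b c \<longleftrightarrow>
     (\<forall>n. mu * R n = R (Suc n) + smult (b n) (R n)
            + (if n = 0 then 0 else smult (c n) (R (n - 1))))"

lemma orthogonal_lattice_iff:
  "orthogonal_lattice mu R \<longleftrightarrow>
     R 0 = 1 \<and> (\<exists>b c. (\<forall>n\<ge>1. c n \<noteq> 0) \<and> three_term_recurrence mu R b c)"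
  unfolding orthogonal_lattice_def three_term_recurrence_def ..

lemma orthogonal_lattice_in_theta_span:
  assumes "orthogonal_lattice (lattice c2 c3) P"
  shows "in_theta_span c2 c3 n (P n)"
proof -
  obtain b c where P0: "P 0 = 1" and rec: "three_term_recurrence (lattice c2 c3) P b c"
    using assms by (auto simp: orthogonal_lattice_iff)
  have P_Suc: "P (Suc n) = lattice c2 c3 * P n - smult (b n) (P n)
                 - (if n = 0 then 0 else smult (c n) (P (n - 1)))" for n
    using rec by (simp add: three_term_recurrence_def algebra_simps)
  have "in_theta_span c2 c3 n (P n) \<and> in_theta_span c2 c3 (Suc n) (P (Suc n))" for n
  proof (induction n)
    case 0
    have P0_span: "in_theta_span c2 c3 0 (P 0)"
      unfolding in_theta_span_def P0 by (rule exI[of _ "\<lambda>_. 1"]) (simp add: theta_def)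
    have "in_theta_span c2 c3 1 (lattice c2 c3 * P 0 - smult (b 0) (P 0))"
      using in_theta_span_lattice_mult[OF P0_span]
        in_theta_span_mono[of 0 1, OF _ in_theta_span_smult[OF P0_span]]
      by (simp add: in_theta_span_diff)
    then have "in_theta_span c2 c3 1 (P 1)"
      using P_Suc[of 0] by simp
    with P0_span show ?case by simp
  next
    case (Suc n)
    have "in_theta_span c2 c3 (Suc (Suc n)) (lattice c2 c3 * P (Suc n))"
      using Suc by (simp add: in_theta_span_lattice_mult)
    moreover have "in_theta_span c2 c3 (Suc (Suc n)) (smult (b (Suc n)) (P (Suc n)))"
      by (rule in_theta_span_mono[of "Suc n"], simp, rule in_theta_span_smult) (use Suc in simp)
    moreover have "in_theta_span c2 c3 (Suc (Suc n)) (smult (c (Suc n)) (P n))"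
      by (rule in_theta_span_mono[of n], simp, rule in_theta_span_smult) (use Suc in simp)
    ultimately show ?case
      using Suc by (simp add: P_Suc[of "Suc n"] in_theta_span_diff)
  qed
  then show ?thesis by blast
qed

lemma coeffA_eqI:
  assumes "\<And>n. P n = (\<Sum>k\<le>n. smult (A n k) (theta c2 c3 k))" "\<And>n k. n < k \<Longrightarrow> A n k = 0"
  shows "coeffA c2 c3 P = A"
  unfolding coeffA_def
proof (rule the_equality)
  fix B assume B: "(\<forall>n. P n = (\<Sum>k\<le>n. smult (B n k) (theta c2 c3 k))) \<and> (\<forall>n k. n < k \<longrightarrow> B n k = 0)"
  show "B = A"
  proof (intro ext)
    fix n k
    show "B n k = A n k"
    proof (cases "k \<le> n")
      case True
      have "(\<Sum>k\<le>n. smult (B n k) (theta c2 c3 k)) = (\<Sum>k\<le>n. smult (A n k) (theta c2 c3 k))"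
        using B assms(1) by simp
      with True show ?thesis by (simp add: theta_coords_eq_iff)
    next
      case False
      with B assms(2) show ?thesis by simp
    qed
  qed
qed (use assms in auto)

lemma
  assumes "orthogonal_lattice (lattice c2 c3) P"
  shows coeffA_expansion: "P n = (\<Sum>k\<le>n. smult (coeffA c2 c3 P n k) (theta c2 c3 k))"
    and coeffA_eq_0: "n < k \<Longrightarrow> coeffA c2 c3 P n k = 0"
proof -
  obtain a where a: "\<And>n. P n = (\<Sum>k\<le>n. smult (a n k) (theta c2 c3 k))"
    using orthogonal_lattice_in_theta_span[OF assms] unfolding in_theta_span_def by metis
  define A where "A n k = (if k \<le> n then a n k else 0)" for n k
  have A_expansion: "P n = (\<Sum>k\<le>n. smult (A n k) (theta c2 c3 k))" for n
    unfolding a[of n] by (rule sum.cong) (auto simp: A_def)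
  have A_eq_0: "n < k \<Longrightarrow> A n k = 0" for n k
    by (simp add: A_def)
  have "coeffA c2 c3 P = A"
    using A_expansion A_eq_0 by (rule coeffA_eqI)
  then show "P n = (\<Sum>k\<le>n. smult (coeffA c2 c3 P n k) (theta c2 c3 k))"
    and "n < k \<Longrightarrow> coeffA c2 c3 P n k = 0"
    using A_expansion A_eq_0 by simp_all
qed

lemma Atilde_eq:
  assumes "orthogonal_lattice (lattice c2 c3) P"
  shows "Atilde c2 c3 P i j = coeffA c2 c3 P (Suc i) (Suc j) * of_nat (Suc j) / of_nat (Suc i)"
proof -
  let ?A = "coeffA c2 c3 P"
  have Dtilde_A: "mmult Dtilde ?A = (\<lambda>i k. inverse (of_nat (Suc i)) * ?A (Suc i) k)"
    by (intro ext, subst mmult_eq_sum[where S="{Suc _}"]) (auto simp: Dtilde_def)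
  have "Atilde c2 c3 P i j = (\<Sum>k\<le>Suc i. inverse (of_nat (Suc i)) * ?A (Suc i) k * Dmat k j)"
    unfolding Atilde_def Dtilde_A
    by (rule mmult_eq_sum) (auto intro: leI dest: coeffA_eq_0[OF assms])
  also have "\<dots> = (\<Sum>k\<le>Suc i. if k = Suc j then ?A (Suc i) (Suc j) * of_nat (Suc j) / of_nat (Suc i) else 0)"
    by (rule sum.cong) (auto simp: Dmat_def field_simps)
  also have "\<dots> = ?A (Suc i) (Suc j) * of_nat (Suc j) / of_nat (Suc i)"
    using coeffA_eq_0[OF assms, of "Suc i" "Suc j"] by auto
  finally show ?thesis .
qed

lemma Atilde_eq_0:
  assumes "orthogonal_lattice (lattice c2 c3) P" "i < j"
  shows "Atilde c2 c3 P i j = 0"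
  using assms by (simp add: Atilde_eq coeffA_eq_0)

lemma dprime_Suc_expansion:
  assumes "orthogonal_lattice (lattice c2 c3) P" "i \<le> N"
  shows "dprime c2 c3 P (Suc i) = (\<Sum>j\<le>N. smult (Atilde c2 c3 P i j) (theta c2 c3 j))"
proof -
  let ?A = "coeffA c2 c3 P"
  have "divdiff c2 c3 (P (Suc i)) = (\<Sum>k\<le>Suc i. smult (?A (Suc i) k * of_nat k) (theta c2 c3 (k - 1)))"
    by (subst coeffA_expansion[OF assms(1)]) (rule divdiff_theta_sum)
  also have "\<dots> = (\<Sum>j\<le>i. smult (?A (Suc i) (Suc j) * of_nat (Suc j)) (theta c2 c3 j))"
    unfolding sum.atMost_Suc_shift by simp
  finally have divdiff_P: "divdiff c2 c3 (P (Suc i))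
      = (\<Sum>j\<le>i. smult (?A (Suc i) (Suc j) * of_nat (Suc j)) (theta c2 c3 j))" .
  have "dprime c2 c3 P (Suc i) = (\<Sum>j\<le>i. smult (Atilde c2 c3 P i j) (theta c2 c3 j))"
    unfolding dprime_def divdiff_P Atilde_eq[OF assms(1)] smult_sum_right smult_smult
    by (intro sum.cong) (auto simp: field_simps)
  also have "\<dots> = (\<Sum>j\<le>N. smult (Atilde c2 c3 P i j) (theta c2 c3 j))"
    using assms by (intro sum.mono_neutral_left) (auto simp: Atilde_eq_0)
  finally show ?thesis .
qed

lemma dprime_1:
  assumes "orthogonal_lattice (lattice c2 c3) P"
  shows "dprime c2 c3 P 1 = 1"
proof -
  obtain b c where P0: "P 0 = 1" and rec: "three_term_recurrence (lattice c2 c3) P b c"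
    using assms by (auto simp: orthogonal_lattice_iff)
  have "lattice c2 c3 * P 0 = P 1 + smult (b 0) (P 0)"
    using rec by (simp add: three_term_recurrence_def)
  then have "P 1 = lattice c2 c3 - smult (b 0) 1"
    unfolding P0 by (simp add: algebra_simps)
  then have "P 1 = lattice c2 c3 - [:b 0:]"
    by (simp add: one_pCons)
  then have "divdiff c2 c3 (P 1) = central_diff (lattice c2 c3) div [:c2, 2:]"
    by (simp add: divdiff_eq_central_diff_div central_diff_def pcompose_diff)
  also have "\<dots> = 1"
    by (simp add: central_diff_lattice)
  finally show ?thesis by (simp add: dprime_def)
qed

section \<open>Rows of the matrix identity\<close>

lemma sum_X1_row_theta:
  assumes "k < N"
  shows "(\<Sum>m\<le>N. smult (X1 c2 c3 k m) (theta c2 c3 m)) = lattice c2 c3 * theta c2 c3 k"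
proof -
  have "(\<Sum>m\<le>N. smult (X1 c2 c3 k m) (theta c2 c3 m))
     = (\<Sum>m\<le>N. (if m = Suc k then theta c2 c3 m else 0)
               + (if m = k then smult (fcoef c2 c3 k) (theta c2 c3 m) else 0))"
    by (rule sum.cong) (auto simp: X1_def)
  also have "\<dots> = lattice c2 c3 * theta c2 c3 k"
    using assms by (simp add: sum.distrib lattice_mult_theta)
  finally show ?thesis .
qed

lemma sum_Atilde_X1_row_theta:
  assumes "orthogonal_lattice (lattice c2 c3) P"
  shows "(\<Sum>m\<le>Suc i. smult (mmult (Atilde c2 c3 P) (X1 c2 c3) i m) (theta c2 c3 m))
     = lattice c2 c3 * dprime c2 c3 P (Suc i)"
proof -
  have "(\<Sum>m\<le>Suc i. smult (mmult (Atilde c2 c3 P) (X1 c2 c3) i m) (theta c2 c3 m))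
     = (\<Sum>k\<le>i. smult (Atilde c2 c3 P i k) (\<Sum>m\<le>Suc i. smult (X1 c2 c3 k m) (theta c2 c3 m)))"
    by (rule sum_smult_mmult_row) (auto intro: leI dest: Atilde_eq_0[OF assms])
  also have "\<dots> = (\<Sum>k\<le>i. smult (Atilde c2 c3 P i k) (lattice c2 c3 * theta c2 c3 k))"
    by (simp add: sum_X1_row_theta del: sum.atMost_Suc)
  also have "\<dots> = lattice c2 c3 * dprime c2 c3 P (Suc i)"
    by (simp add: dprime_Suc_expansion[OF assms order_refl] sum_distrib_left mult_smult_right)
  finally show ?thesis .
qed

lemma sum_Mtri_Atilde_row_theta:
  assumes "orthogonal_lattice (lattice c2 c3) P"
  shows "(\<Sum>m\<le>Suc i. smult (mmult (Mtri beta gamma) (Atilde c2 c3 P) i m) (theta c2 c3 m))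
     = dprime c2 c3 P (Suc (Suc i)) + smult (beta i) (dprime c2 c3 P (Suc i))
       + (if i = 0 then 0 else smult (gamma i) (dprime c2 c3 P (Suc (i - 1))))"
proof -
  let ?Q = "\<lambda>k. dprime c2 c3 P (Suc k)"
  have "(\<Sum>m\<le>Suc i. smult (mmult (Mtri beta gamma) (Atilde c2 c3 P) i m) (theta c2 c3 m))
     = (\<Sum>k\<le>Suc i. smult (Mtri beta gamma i k) (?Q k))"
    by (subst sum_smult_mmult_row[where S="{..Suc i}"])
      (auto simp: Mtri_def dprime_Suc_expansion[OF assms])
  also have "\<dots> = (\<Sum>k\<le>Suc i. (if k = i then smult (beta i) (?Q k) else 0)
        + (if k = Suc i then ?Q k else 0)
        + (if i = 0 then 0 else if k = i - 1 then smult (gamma i) (?Q k) else 0))"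
    by (rule sum.cong) (auto simp: Mtri_def)
  also have "\<dots> = ?Q (Suc i) + smult (beta i) (?Q i) + (if i = 0 then 0 else smult (gamma i) (?Q (i - 1)))"
    by (simp add: sum.distrib)
  finally show ?thesis by simp
qed

lemma
  assumes "orthogonal_lattice (lattice c2 c3) P" "Suc i < m"
  shows mmult_Mtri_Atilde_eq_0: "mmult (Mtri beta gamma) (Atilde c2 c3 P) i m = 0"
    and mmult_Atilde_X1_eq_0: "mmult (Atilde c2 c3 P) (X1 c2 c3) i m = 0"
proof -
  show "mmult (Mtri beta gamma) (Atilde c2 c3 P) i m = 0"
    using assms by (subst mmult_eq_sum[where S="{..Suc i}"])
      (auto simp: Mtri_def Atilde_eq_0 intro!: sum.neutral)
  show "mmult (Atilde c2 c3 P) (X1 c2 c3) i m = 0"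
    using assms by (subst mmult_eq_sum[where S="{..i}"])
      (auto simp: X1_def intro: leI dest: Atilde_eq_0 intro!: sum.neutral)
qed

lemma three_term_recurrence_dprime_iff:
  assumes "orthogonal_lattice (lattice c2 c3) P"
  shows "three_term_recurrence (lattice c2 c3) (\<lambda>n. dprime c2 c3 P (Suc n)) beta gamma
     \<longleftrightarrow> mmult (Mtri beta gamma) (Atilde c2 c3 P) = mmult (Atilde c2 c3 P) (X1 c2 c3)"
proof -
  let ?Q = "\<lambda>n. dprime c2 c3 P (Suc n)"
  let ?L = "mmult (Mtri beta gamma) (Atilde c2 c3 P)" and ?R = "mmult (Atilde c2 c3 P) (X1 c2 c3)"
  have row_iff: "(\<forall>m. ?L i m = ?R i m) \<longleftrightarrow> lattice c2 c3 * ?Q i = ?Q (Suc i) + smult (beta i) (?Q i)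
     + (if i = 0 then 0 else smult (gamma i) (?Q (i - 1)))" for i
  proof -
    have "(\<forall>m. ?L i m = ?R i m) \<longleftrightarrow> (\<forall>m\<le>Suc i. ?L i m = ?R i m)"
      using mmult_Mtri_Atilde_eq_0[OF assms] mmult_Atilde_X1_eq_0[OF assms] not_le by metis
    also have "\<dots> \<longleftrightarrow> (\<Sum>m\<le>Suc i. smult (?L i m) (theta c2 c3 m))
                      = (\<Sum>m\<le>Suc i. smult (?R i m) (theta c2 c3 m))"
      by (rule theta_coords_eq_iff[symmetric])
    finally show ?thesis
      by (simp only: sum_Mtri_Atilde_row_theta[OF assms] sum_Atilde_X1_row_theta[OF assms] eq_commute)
  qed
  show ?thesis
    unfolding three_term_recurrence_def fun_eq_iff row_iff ..
qed

theorem proposition3p1: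
  fixes c2 c3 :: "'a::field_char_0" and P :: "nat \<Rightarrow> 'a poly"
  assumes "orthogonal_lattice (lattice c2 c3) P"
  shows "classical_lattice c2 c3 P \<longleftrightarrow>
    (\<exists>beta' gamma'.
       (\<forall>n\<ge>1. gamma' n \<noteq> 0) \<and>
       mmult (Mtri beta' gamma') (Atilde c2 c3 P) = mmult (Atilde c2 c3 P) (X1 c2 c3))"
proof -
  have "classical_lattice c2 c3 P \<longleftrightarrow> (\<exists>b c. (\<forall>n\<ge>1. c n \<noteq> 0) \<and>
          three_term_recurrence (lattice c2 c3) (\<lambda>n. dprime c2 c3 P (Suc n)) b c)"
    unfolding classical_lattice_def orthogonal_lattice_iff using dprime_1[OF assms] by simp
  then show ?thesis
    by (simp only: three_term_recurrence_dprime_iff[OF assms])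
qed

end
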